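(* Let $K=(S,L,\to)$ be a Kripke structure and $\mathcal{C}$ a colouring of $S$ such that any two states with the same colour satisfy the same atomic propositions and have the same $\mathcal{C}$-coloured traces of length two. Then $\mathcal{C}$ is consistent.
   Context: Fix a set $\mathbf{AP}$ of atomic propositions. A Kripke structure is $K=(S,L,\to)$ with $L:S\to\mathcal{P}(\mathbf{AP})$ and $\to\subseteq S\times S$ (not necessarily total); a state $s$ satisfies $p\in\mathbf{AP}$ iff $p\in L(s)$. A finite path from $s$ is a sequence $s_0,\dots,s_n$ with $s_0=s$ and $s_k\to s_{k+1}$; an infinite path is defined analogously. A colouring is a function $\mathcal{C}$ from $S$ into an arbitrary set of colours. For a path $\pi=s_0,s_1,\dots$, $\mathcal{C}(\pi)$ is obtained from $\mathcal{C}(s_0),\mathcal{C}(s_1),\dots$ by contracting each maximal (finite or infinite) block of consecutive equal colours to a single colour; for $\pi$ a path from $s$, $\mathcal{C}(\pi)$ is a $\mathcal{C}$-coloured trace of $s$, and its length is its number of entries. $\mathcal{C}$ is consistent if any two states of the same colour satisfy the same atomic propositions and have the same (finite and infinite) $\mathcal{C}$-coloured traces. *)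

theory Defs
  imports Main "HOL-Library.Infinite_Set"
begin

text \<open>A Kripke structure is given by a labelling L :: 's => 'ap set and a
transition relation R :: 's => 's => bool (not necessarily total).
A colouring is any function C :: 's => 'c.\<close>

datatype 'c ctrace = FinT "'c list" | InfT "nat \<Rightarrow> 'c"

definition fin_path :: "('s \<Rightarrow> 's \<Rightarrow> bool) \<Rightarrow> 's \<Rightarrow> 's list \<Rightarrow> bool" where
  "fin_path R s xs \<longleftrightarrow> xs \<noteq> [] \<and> hd xs = s \<and>
     (\<forall>i. Suc i < length xs \<longrightarrow> R (xs ! i) (xs ! Suc i))"

definition inf_path :: "('s \<Rightarrow> 's \<Rightarrow> bool) \<Rightarrow> 's \<Rightarrow> (nat \<Rightarrow> 's) \<Rightarrow> bool" where
  "inf_path R s p \<longleftrightarrow> p 0 = s \<and> (\<forall>i. R (p i) (p (Suc i)))"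

text \<open>Contraction of an infinite colour sequence: each maximal block of equal
consecutive colours (possibly an infinite final block) becomes one colour.\<close>
definition contract_inf :: "(nat \<Rightarrow> 'c) \<Rightarrow> 'c ctrace" where
  "contract_inf f =
    (let changes = {i. f (Suc i) \<noteq> f i} in
     if finite changes then
       FinT (remdups_adj (map f [0..<Suc (if changes = {} then 0 else Suc (Max changes))]))
     else
       InfT (\<lambda>k. f (enumerate {i. i = 0 \<or> (\<exists>j. i = Suc j \<and> f i \<noteq> f j)} k)))"

definition ctraces :: "('s \<Rightarrow> 's \<Rightarrow> bool) \<Rightarrow> ('s \<Rightarrow> 'c) \<Rightarrow> 's \<Rightarrow> 'c ctrace set" where
  "ctraces R C s =
     {FinT (remdups_adj (map C xs)) | xs. fin_path R s xs}
     \<union> {contract_inf (C \<circ> p) | p. inf_path R s p}"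

fun ctrace_len :: "'c ctrace \<Rightarrow> nat option" where
  "ctrace_len (FinT l) = Some (length l)"
| "ctrace_len (InfT f) = None"

definition consistent :: "('s \<Rightarrow> 'ap set) \<Rightarrow> ('s \<Rightarrow> 's \<Rightarrow> bool) \<Rightarrow> ('s \<Rightarrow> 'c) \<Rightarrow> bool" where
  "consistent L R C \<longleftrightarrow>
     (\<forall>s t. C s = C t \<longrightarrow> L s = L t \<and> ctraces R C s = ctraces R C t)"

end

theory Submission
  imports Defs
begin

text \<open>Coloured traces are assembled from colour steps: paths that stay in the colour of their first
state and then enter a new colour \<open>c\<close>. Such a step leaves \<open>u\<close> exactly when \<open>[C u, c]\<close> is a
coloured trace of \<open>u\<close>, so the hypothesis says that the available colour steps depend only on the
colour of a state. A state \<open>t\<close> with the colour of \<open>s\<close> can therefore follow any path from \<open>s\<close> block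
by block: finite paths by induction, infinite ones by choosing one step per colour change (dependent
choice) and concatenating the steps. The concatenated path changes colour exactly at the junctions,
so its contraction is the sequence of block colours of the original path.\<close>

lemma fin_path_iff_successively:
  "fin_path R s xs \<longleftrightarrow> xs \<noteq> [] \<and> hd xs = s \<and> successively R xs"
  by (simp add: fin_path_def successively_conv_nth)

lemma fin_path_Cons_Cons:
  "fin_path R u (u # y # ys) \<longleftrightarrow> R u y \<and> fin_path R y (y # ys)"
  by (simp add: fin_path_iff_successively)

lemma fin_path_append:
  "fin_path R u (xs @ [v]) \<Longrightarrow> fin_path R v (v # ys) \<Longrightarrow> fin_path R u (xs @ v # ys)"
  using successively_append_iff[of R "xs @ [v]" ys]
  by (cases xs; cases ys) (auto simp: fin_path_iff_successively successively_Cons)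

lemma fin_path_take:
  "fin_path R u ys \<Longrightarrow> 0 < n \<Longrightarrow> fin_path R u (take n ys)"
  using append_take_drop_id[of n ys]
  by (metis (no_types) fin_path_iff_successively successively_append_iff hd_append2 take_eq_Nil not_gr_zero)

lemma inf_path_fin_path_upt:
  "inf_path R s p \<Longrightarrow> a \<le> b \<Longrightarrow> fin_path R (p a) (map p [a..<Suc b])"
  unfolding fin_path_def inf_path_def by (auto simp: hd_map nth_append simp del: upt_Suc)

lemma remdups_adj_const_append:
  assumes "xs \<noteq> []" "\<forall>x\<in>set xs. x = a" "b \<noteq> a"
  shows "remdups_adj (xs @ b # ys) = a # remdups_adj (b # ys)"
  using assms
proof (induction xs)
  case (Cons x xs)
  then show ?case by (cases xs) auto
qed simp

definition colour_step :: "('s \<Rightarrow> 's \<Rightarrow> bool) \<Rightarrow> ('s \<Rightarrow> 'c) \<Rightarrow> 's \<Rightarrow> 'c \<Rightarrow> 's list \<Rightarrow> 's \<Rightarrow> bool" where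
  "colour_step R C u c xs v \<longleftrightarrow>
     fin_path R u (xs @ [v]) \<and> (\<forall>x\<in>set xs. C x = C u) \<and> C v = c \<and> c \<noteq> C u"

lemma colour_step_hd:
  assumes "colour_step R C u c xs v"
  shows "xs \<noteq> []" and "hd xs = u"
proof -
  show "xs \<noteq> []"
    using assms by (auto simp: colour_step_def fin_path_def)
  then show "hd xs = u"
    using assms by (auto simp: colour_step_def fin_path_def)
qed

lemma colour_step_trace:
  "colour_step R C u c xs v \<Longrightarrow> remdups_adj (map C (xs @ [v])) = [C u, c]"
  using colour_step_hd(1)[of R C u c xs v] remdups_adj_const_append[of "map C xs" "C u" "C v" "[]"]
  by (auto simp: colour_step_def)

lemma colour_step_of_trace:
  assumes path: "fin_path R u ys" and trace: "remdups_adj (map C ys) = [C u, c]"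
  shows "\<exists>xs v. colour_step R C u c xs v"
proof -
  define xs where "xs = takeWhile (\<lambda>x. C x = C u) ys"
  have "\<not> (\<forall>x\<in>set ys. C x = C u)"
  proof
    assume "\<forall>x\<in>set ys. C x = C u"
    then have "map C ys = replicate (length ys) (C u)"
      using replicate_length_same[of "map C ys" "C u"] by auto
    with trace show False
      by (simp add: remdups_adj_replicate split: if_splits)
  qed
  then obtain v rest where drop: "dropWhile (\<lambda>x. C x = C u) ys = v # rest"
    by (cases "dropWhile (\<lambda>x. C x = C u) ys") (auto simp: dropWhile_eq_Nil_conv)
  have split: "ys = xs @ v # rest"
    unfolding xs_def using takeWhile_dropWhile_id[of "\<lambda>x. C x = C u" ys] drop by simp
  have v: "C v \<noteq> C u"
    using hd_dropWhile[of "\<lambda>x. C x = C u" ys] drop by simp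
  have "xs \<noteq> []"
    using path split v by (cases xs) (auto simp: fin_path_def)
  moreover have colours: "\<forall>x\<in>set xs. C x = C u"
    unfolding xs_def by (auto dest: set_takeWhileD)
  ultimately have "remdups_adj (map C ys) = C u # remdups_adj (C v # map C rest)"
    using split v remdups_adj_const_append[of "map C xs" "C u" "C v" "map C rest"] by simp
  then have "C v = c"
    using trace by (metis hd_remdups_adj list.sel(1,3))
  moreover have "fin_path R u (xs @ [v])"
    using fin_path_take[OF path, of "Suc (length xs)"] split by simp
  ultimately show ?thesis
    using colours v unfolding colour_step_def by blast
qed

lemma contract_inf_FinT:
  "contract_inf f = FinT l \<Longrightarrow> \<exists>n. l = remdups_adj (map f [0..<Suc n])"
  unfolding contract_inf_def Let_def by (auto split: if_splits simp del: upt_Suc)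

lemma FinT_in_ctraces:
  "FinT l \<in> ctraces R C s \<longleftrightarrow> (\<exists>xs. fin_path R s xs \<and> l = remdups_adj (map C xs))"
proof
  assume "FinT l \<in> ctraces R C s"
  then consider xs where "fin_path R s xs" "l = remdups_adj (map C xs)"
    | p where "inf_path R s p" "contract_inf (C \<circ> p) = FinT l"
    unfolding ctraces_def by auto
  then show "\<exists>xs. fin_path R s xs \<and> l = remdups_adj (map C xs)"
  proof cases
    case (2 p)
    then obtain n where "l = remdups_adj (map C (map p [0..<Suc n]))"
      using contract_inf_FinT by (metis map_map)
    moreover have "fin_path R s (map p [0..<Suc n])"
      using inf_path_fin_path_upt[OF \<open>inf_path R s p\<close>, of 0 n] \<open>inf_path R s p\<close>
      by (simp add: inf_path_def)
    ultimately show ?thesis by blast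
  qed blast
qed (auto simp: ctraces_def)

definition colour_determines_steps :: "('s \<Rightarrow> 's \<Rightarrow> bool) \<Rightarrow> ('s \<Rightarrow> 'c) \<Rightarrow> bool" where
  "colour_determines_steps R C \<longleftrightarrow>
     (\<forall>u w c xs v. C u = C w \<longrightarrow> colour_step R C w c xs v \<longrightarrow> (\<exists>xs' v'. colour_step R C u c xs' v'))"

lemma colour_determines_stepsI:
  assumes "\<And>s t. C s = C t \<Longrightarrow>
             {tr \<in> ctraces R C s. ctrace_len tr = Some 2} = {tr \<in> ctraces R C t. ctrace_len tr = Some 2}"
  shows "colour_determines_steps R C"
  unfolding colour_determines_steps_def
proof (intro allI impI)
  fix u w c xs v
  assume same: "C u = C w" and step: "colour_step R C w c xs v"
  have "fin_path R w (xs @ [v])"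
    using step by (simp add: colour_step_def)
  then have "FinT [C w, c] \<in> ctraces R C w"
    unfolding FinT_in_ctraces using colour_step_trace[OF step] by (intro exI[of _ "xs @ [v]"]) simp
  then have "FinT [C w, c] \<in> {tr \<in> ctraces R C u. ctrace_len tr = Some 2}"
    unfolding assms[OF same] by simp
  then have "FinT [C u, c] \<in> ctraces R C u"
    using same by simp
  then obtain ys where "fin_path R u ys" "remdups_adj (map C ys) = [C u, c]"
    unfolding FinT_in_ctraces by auto
  then show "\<exists>xs' v'. colour_step R C u c xs' v'"
    by (rule colour_step_of_trace)
qed

lemma fin_trace_simulation:
  assumes determined: "colour_determines_steps R C"
    and "fin_path R s xs" and "C t = C s"
  shows "\<exists>ys. fin_path R t ys \<and> remdups_adj (map C ys) = remdups_adj (map C xs)"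
  using assms(2,3)
proof (induction xs arbitrary: s t)
  case Nil
  then show ?case by (simp add: fin_path_def)
next
  case (Cons x xs)
  then have [simp]: "x = s" by (simp add: fin_path_def)
  show ?case
  proof (cases xs)
    case Nil
    then show ?thesis using Cons.prems by (intro exI[of _ "[t]"]) (simp add: fin_path_def)
  next
    case (Cons y zs)
    have "R s y" and path_y: "fin_path R y xs"
      using Cons.prems(1) \<open>xs = y # zs\<close> by (auto simp: fin_path_Cons_Cons)
    show ?thesis
    proof (cases "C y = C s")
      case True
      then show ?thesis
        using Cons.IH[OF path_y, of t] Cons.prems(2) \<open>xs = y # zs\<close> by auto
    next
      case False
      have "colour_step R C s (C y) [s] y"
        using \<open>R s y\<close> False by (simp add: colour_step_def fin_path_def)
      then obtain ws v where step: "colour_step R C t (C y) ws v"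
        using determined Cons.prems(2) unfolding colour_determines_steps_def by blast
      then obtain vs where vs: "fin_path R v vs" "remdups_adj (map C vs) = remdups_adj (map C xs)"
        using Cons.IH[OF path_y, of v] by (auto simp: colour_step_def)
      then obtain vs' where [simp]: "vs = v # vs'"
        by (cases vs) (auto simp: fin_path_def)
      have "fin_path R t (ws @ vs)"
        using step vs(1) fin_path_append[of R t ws v vs'] by (simp add: colour_step_def)
      moreover have "remdups_adj (map C (ws @ vs)) = C t # remdups_adj (map C vs)"
        using step colour_step_hd(1)[OF step]
          remdups_adj_const_append[of "map C ws" "C t" "C v" "map C vs'"]
        by (simp add: colour_step_def)
      moreover have "remdups_adj (map C (x # xs)) = C s # remdups_adj (map C xs)"
        using False \<open>xs = y # zs\<close> by simp
      ultimately show ?thesis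
        using vs(2) Cons.prems(2) by metis
    qed
  qed
qed

definition block_starts :: "(nat \<Rightarrow> 'c) \<Rightarrow> (nat \<Rightarrow> nat) \<Rightarrow> bool" where
  "block_starts f b \<longleftrightarrow> strict_mono b \<and> b 0 = 0 \<and>
     (\<forall>k i. b k \<le> i \<longrightarrow> i < b (Suc k) \<longrightarrow> f i = f (b k)) \<and> (\<forall>k. f (b (Suc k)) \<noteq> f (b k))"

lemma strict_mono_nat_cover:
  fixes b :: "nat \<Rightarrow> nat"
  assumes "strict_mono b" "b 0 = 0"
  shows "\<exists>k. b k \<le> n \<and> n < b (Suc k)"
proof (induction n)
  case 0
  show ?case using assms strict_monoD[OF assms(1), of 0 1] by (intro exI[of _ 0]) simp
next
  case (Suc n)
  then obtain k where k: "b k \<le> n" "n < b (Suc k)" by blast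
  show ?case
  proof (cases "Suc n < b (Suc k)")
    case True
    with k show ?thesis by (intro exI[of _ k]) simp
  next
    case False
    with k have "b (Suc k) = Suc n" by simp
    then show ?thesis
      using strict_monoD[OF assms(1), of "Suc k" "Suc (Suc k)"] by (intro exI[of _ "Suc k"]) simp
  qed
qed

lemma enumerate_range_strict_mono:
  fixes b :: "nat \<Rightarrow> nat"
  assumes "strict_mono b"
  shows "enumerate (range b) = b"
proof
  fix n
  show "enumerate (range b) n = b n"
    using assms
  proof (induction n arbitrary: b)
    case 0
    then show ?case
      by (auto simp: enumerate_0 strict_mono_less_eq intro!: Least_equality)
  next
    case (Suc n)
    have "enumerate (range b) 0 = b 0"
      using Suc.prems by (auto simp: enumerate_0 strict_mono_less_eq intro!: Least_equality)
    moreover have "range b - {b 0} = range (\<lambda>k. b (Suc k))"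
      using strict_mono_eq[OF Suc.prems] by (auto simp: image_iff) (metis not0_implies_Suc)
    moreover have "strict_mono (\<lambda>k. b (Suc k))"
      using Suc.prems by (simp add: strict_mono_Suc_iff)
    ultimately show ?case
      using Suc.IH by (simp add: enumerate_Suc')
  qed
qed

lemma block_starts_change_points:
  assumes "block_starts f b"
  shows "{i. i = 0 \<or> (\<exists>j. i = Suc j \<and> f i \<noteq> f j)} = range b"
proof (intro set_eqI iffI)
  fix i
  assume "i \<in> {i. i = 0 \<or> (\<exists>j. i = Suc j \<and> f i \<noteq> f j)}"
  then consider "i = 0" | j where "i = Suc j" "f (Suc j) \<noteq> f j" by auto
  then show "i \<in> range b"
  proof cases
    case 1
    then show ?thesis using assms by (auto simp: block_starts_def)
  next
    case (2 j)
    obtain k where "b k \<le> j" "j < b (Suc k)"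
      using assms strict_mono_nat_cover by (metis block_starts_def)
    with 2 assms have "Suc j = b (Suc k)"
      unfolding block_starts_def by (metis Suc_leI le_SucI le_neq_implies_less)
    then show ?thesis using 2 by auto
  qed
next
  fix i
  assume "i \<in> range b"
  then obtain k where i: "i = b k" by auto
  show "i \<in> {i. i = 0 \<or> (\<exists>j. i = Suc j \<and> f i \<noteq> f j)}"
  proof (cases k)
    case 0
    then show ?thesis using assms i by (simp add: block_starts_def)
  next
    case (Suc m)
    have "b m < b k"
      using assms Suc by (simp add: block_starts_def strict_mono_Suc_iff)
    then obtain j where j: "b k = Suc j" "b m \<le> j"
      by (metis less_imp_Suc_add le_add1)
    then have "f j = f (b m)"
      using assms Suc by (auto simp: block_starts_def)
    moreover have "f (b k) \<noteq> f (b m)"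
      using assms Suc by (simp add: block_starts_def)
    ultimately show ?thesis
      using i j by auto
  qed
qed

lemma contract_inf_block_starts:
  assumes "block_starts f b"
  shows "contract_inf f = InfT (f \<circ> b)"
proof -
  have starts: "{i. i = 0 \<or> (\<exists>j. i = Suc j \<and> f i \<noteq> f j)} = range b"
    by (rule block_starts_change_points[OF assms])
  have "infinite (range b)"
    using assms by (simp add: block_starts_def range_inj_infinite strict_mono_imp_inj_on)
  moreover have "range b \<subseteq> insert 0 (Suc ` {i. f (Suc i) \<noteq> f i})"
    unfolding starts[symmetric] by auto
  ultimately have "infinite {i. f (Suc i) \<noteq> f i}"
    using finite_subset by blast
  then have "contract_inf f = InfT (\<lambda>k. f (enumerate (range b) k))"
    unfolding contract_inf_def Let_def starts by simp
  then show ?thesis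
    using assms enumerate_range_strict_mono by (simp add: block_starts_def comp_def)
qed

lemma block_starts_of_contract_inf:
  assumes "contract_inf f = InfT h"
  shows "\<exists>b. block_starts f b"
proof -
  define E where "E = {i. i = 0 \<or> (\<exists>j. i = Suc j \<and> f i \<noteq> f j)}"
  define b where "b = enumerate E"
  have "infinite {i. f (Suc i) \<noteq> f i}"
    using assms by (auto simp: contract_inf_def Let_def split: if_splits)
  moreover have "Suc ` {i. f (Suc i) \<noteq> f i} \<subseteq> E"
    unfolding E_def by auto
  ultimately have "infinite E"
    by (metis finite_subset finite_imageD inj_Suc inj_on_subset subset_UNIV)
  then have mono: "strict_mono b" and range: "range b = E"
    unfolding b_def by (simp_all add: strict_mono_enumerate range_enumerate)
  have "b 0 = 0"
    unfolding b_def E_def by (simp add: enumerate_0 Least_eq_0)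
  have gap: "Suc n \<notin> E" if "b k \<le> n" "Suc n < b (Suc k)" for k n
  proof
    assume "Suc n \<in> E"
    then obtain m where "b m = Suc n" using range by auto
    then have "k < m" and "m < Suc k"
      using that strict_mono_less[OF mono] by (metis le_imp_less_Suc)+
    then show False by simp
  qed
  have const: "f i = f (b k)" if "b k \<le> i" "i < b (Suc k)" for k i
    using that(1)
  proof (induction i rule: dec_induct)
    case (step n)
    then have "f (Suc n) = f n"
      using gap[of k n] that(2) unfolding E_def by auto
    then show ?case using step.IH by simp
  qed simp
  have "f (b (Suc k)) \<noteq> f (b k)" for k
  proof -
    have "b k < b (Suc k)" using mono by (simp add: strict_mono_Suc_iff)
    moreover have "b (Suc k) \<in> E" using range by auto
    ultimately obtain j where j: "b (Suc k) = Suc j" "f (Suc j) \<noteq> f j"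
      unfolding E_def by auto
    then have "f j = f (b k)"
      using const \<open>b k < b (Suc k)\<close> by simp
    then show ?thesis using j by simp
  qed
  then show ?thesis
    using mono \<open>b 0 = 0\<close> const unfolding block_starts_def by blast
qed

text \<open>Meaningful only when all lists are nonempty: then the first \<open>n + 1\<close> lists cover position \<open>n\<close>.\<close>

definition concat_inf :: "(nat \<Rightarrow> 'a list) \<Rightarrow> nat \<Rightarrow> 'a" where
  "concat_inf xss n = concat (map xss [0..<Suc n]) ! n"

lemma concat_map_upt_append:
  "m \<le> m' \<Longrightarrow> concat (map xss [0..<m']) = concat (map xss [0..<m]) @ concat (map xss [m..<m'])"
  using upt_add_eq_append[of 0 m "m' - m"] by simp

lemma length_concat_map_upt_ge:
  "(\<And>k. xss k \<noteq> []) \<Longrightarrow> m \<le> length (concat (map xss [0..<m]))"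
proof (induction m)
  case (Suc m)
  have "xss m \<noteq> []" by (fact Suc.prems)
  then have "0 < length (xss m)" by simp
  moreover have "length (concat (map xss [0..<Suc m])) = length (concat (map xss [0..<m])) + length (xss m)"
    by simp
  ultimately show ?case using Suc.IH[OF Suc.prems] by linarith
qed simp

lemma concat_inf_nth:
  assumes "\<And>k. xss k \<noteq> []" and "i < length (xss k)"
  shows "concat_inf xss (length (concat (map xss [0..<k])) + i) = xss k ! i"
proof -
  let ?P = "\<lambda>m. concat (map xss [0..<m])"
  define n where "n = length (?P k) + i"
  have agree: "?P m' ! n = ?P m ! n" if "m \<le> m'" "n < length (?P m)" for m m'
    using that concat_map_upt_append[OF that(1), of xss] by (simp add: nth_append)
  have "n < length (?P (Suc n))"
    using length_concat_map_upt_ge[of xss "Suc n", OF assms(1)] by simp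
  moreover have "n < length (?P (Suc k))"
    using assms(2) by (simp add: n_def)
  ultimately have "?P (Suc n) ! n = ?P (Suc k) ! n"
    using agree nat_le_linear by metis
  also have "\<dots> = xss k ! i"
    by (simp add: n_def nth_append)
  finally show ?thesis
    by (simp add: concat_inf_def n_def)
qed

lemma concat_colour_steps:
  assumes steps: "\<And>k. colour_step R C (U k) (C (U (Suc k))) (seg k) (U (Suc k))"
  defines "b \<equiv> \<lambda>k. length (concat (map seg [0..<k]))"
  shows "inf_path R (U 0) (concat_inf seg)" and "block_starts (C \<circ> concat_inf seg) b"
    and "concat_inf seg \<circ> b = U"
proof -
  let ?q = "concat_inf seg"
  have ne: "seg k \<noteq> []" for k
    using colour_step_hd(1)[OF steps] .
  have nth: "?q (b k + i) = seg k ! i" if "i < length (seg k)" for k i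
    unfolding b_def using concat_inf_nth[of seg, OF ne that] .
  have b_Suc: "b (Suc k) = b k + length (seg k)" for k
    by (simp add: b_def)
  have mono: "strict_mono b"
    using ne by (simp add: strict_mono_Suc_iff b_Suc)
  have "b 0 = 0"
    by (simp add: b_def)
  have q_b: "?q (b k) = U k" for k
    using nth[of 0 k] ne[of k] colour_step_hd(2)[OF steps, of k] by (simp add: hd_conv_nth)
  then show "?q \<circ> b = U"
    by auto
  have in_seg: "?q n \<in> set (seg k)" if "b k \<le> n" "n < b (Suc k)" for k n
    using nth[of "n - b k" k] that by (simp add: b_Suc)
  have "C (?q n) = C (?q (b k))" if "b k \<le> n" "n < b (Suc k)" for k n
    using in_seg[OF that] steps[of k] q_b[of k] by (simp add: colour_step_def)
  moreover have "C (?q (b (Suc k))) \<noteq> C (?q (b k))" for k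
    using steps[of k] by (simp add: q_b colour_step_def)
  ultimately show "block_starts (C \<circ> ?q) b"
    using mono \<open>b 0 = 0\<close> by (simp add: block_starts_def)
  have "R (?q n) (?q (Suc n))" for n
  proof -
    obtain k where k: "b k \<le> n" "n < b (Suc k)"
      using strict_mono_nat_cover[OF mono \<open>b 0 = 0\<close>] by blast
    define i where "i = n - b k"
    define ps where "ps = seg k @ [U (Suc k)]"
    have i: "n = b k + i" "i < length (seg k)"
      using k by (simp_all add: i_def b_Suc)
    have "?q n = ps ! i"
      using nth i by (simp add: ps_def nth_append)
    moreover have "?q (Suc n) = ps ! Suc i"
    proof (cases "Suc i < length (seg k)")
      case True
      then show ?thesis using nth[OF True] i by (simp add: ps_def nth_append)
    next
      case False
      then have "Suc n = b (Suc k)" using i by (simp add: b_Suc)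
      then show ?thesis using q_b False i by (simp add: ps_def nth_append)
    qed
    moreover have "fin_path R (U k) ps"
      using steps[of k] by (simp add: ps_def colour_step_def)
    ultimately show ?thesis
      using i by (simp add: fin_path_def ps_def)
  qed
  then show "inf_path R (U 0) ?q"
    using q_b[of 0] \<open>b 0 = 0\<close> by (simp add: inf_path_def)
qed

lemma block_colour_step:
  assumes "inf_path R s p" and "block_starts (C \<circ> p) b"
  shows "colour_step R C (p (b k)) (C (p (b (Suc k)))) (map p [b k..<b (Suc k)]) (p (b (Suc k)))"
proof -
  have "b k < b (Suc k)"
    using assms(2) by (simp add: block_starts_def strict_mono_Suc_iff)
  then have "map p [b k..<b (Suc k)] @ [p (b (Suc k))] = map p [b k..<Suc (b (Suc k))]"
    by simp
  then show ?thesis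
    using inf_path_fin_path_upt[OF assms(1), of "b k" "b (Suc k)"] \<open>b k < b (Suc k)\<close> assms(2)
    by (auto simp: colour_step_def block_starts_def)
qed

lemma colour_step_chain:
  assumes next_step: "\<And>k u. C u = g k \<Longrightarrow> \<exists>xs v. colour_step R C u (g (Suc k)) xs v"
    and "C t = g 0"
  obtains U seg where "U 0 = t" and "\<And>k. C (U k) = g k"
    and "\<And>k. colour_step R C (U k) (C (U (Suc k))) (seg k) (U (Suc k))"
proof -
  have "\<exists>U. \<forall>k. (C (U k) = g k \<and> (k = 0 \<longrightarrow> U k = t)) \<and>
             (\<exists>xs. colour_step R C (U k) (g (Suc k)) xs (U (Suc k)))"
  proof (rule dependent_nat_choice)
    show "\<exists>u. C u = g 0 \<and> (0 = 0 \<longrightarrow> u = t)"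
      using \<open>C t = g 0\<close> by blast
    fix u k
    assume "C u = g k \<and> (k = 0 \<longrightarrow> u = t)"
    then obtain xs v where "colour_step R C u (g (Suc k)) xs v"
      using next_step by blast
    then show "\<exists>v. (C v = g (Suc k) \<and> (Suc k = 0 \<longrightarrow> v = t)) \<and>
                   (\<exists>xs. colour_step R C u (g (Suc k)) xs v)"
      by (auto simp: colour_step_def)
  qed
  then obtain U where U: "\<And>k. C (U k) = g k" "U 0 = t"
    and "\<forall>k. \<exists>xs. colour_step R C (U k) (g (Suc k)) xs (U (Suc k))"
    by blast
  then obtain seg where "\<And>k. colour_step R C (U k) (g (Suc k)) (seg k) (U (Suc k))"
    using choice[of "\<lambda>k xs. colour_step R C (U k) (g (Suc k)) xs (U (Suc k))"] by blast
  then have "\<And>k. colour_step R C (U k) (C (U (Suc k))) (seg k) (U (Suc k))"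
    using U(1) by simp
  with U show ?thesis
    using that by blast
qed

lemma inf_trace_simulation:
  assumes determined: "colour_determines_steps R C"
    and "inf_path R s p" and "block_starts (C \<circ> p) b" and "C t = C s"
  shows "\<exists>q b'. inf_path R t q \<and> block_starts (C \<circ> q) b' \<and> C \<circ> q \<circ> b' = C \<circ> p \<circ> b"
proof -
  let ?g = "\<lambda>k. C (p (b k))"
  have next_step: "\<exists>xs v. colour_step R C u (?g (Suc k)) xs v" if "C u = ?g k" for u k
    using determined that block_colour_step[OF assms(2,3)] unfolding colour_determines_steps_def by blast
  have "C t = ?g 0"
    using assms(2-4) by (simp add: block_starts_def inf_path_def)
  obtain U seg where U: "U 0 = t" "\<And>k. C (U k) = ?g k"
    and steps: "\<And>k. colour_step R C (U k) (C (U (Suc k))) (seg k) (U (Suc k))"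
    using colour_step_chain[where g = ?g, OF next_step \<open>C t = ?g 0\<close>] by blast
  define b' where "b' = (\<lambda>k. length (concat (map seg [0..<k])))"
  show ?thesis
  proof (intro exI conjI)
    show "inf_path R t (concat_inf seg)"
      using concat_colour_steps(1)[of R C U seg, OF steps] U(1) by simp
    show "block_starts (C \<circ> concat_inf seg) b'"
      unfolding b'_def using concat_colour_steps(2)[of R C U seg, OF steps] .
    show "C \<circ> concat_inf seg \<circ> b' = C \<circ> p \<circ> b"
      using concat_colour_steps(3)[of R C U seg, OF steps] U(2) by (auto simp: b'_def fun_eq_iff)
  qed
qed

lemma ctraces_subset:
  assumes determined: "colour_determines_steps R C"
    and "C t = C s"
  shows "ctraces R C s \<subseteq> ctraces R C t"
proof
  fix tr
  assume tr: "tr \<in> ctraces R C s"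
  show "tr \<in> ctraces R C t"
  proof (cases tr)
    case (FinT l)
    then obtain xs where xs: "fin_path R s xs" "l = remdups_adj (map C xs)"
      using tr by (auto simp: FinT_in_ctraces)
    have "\<exists>ys. fin_path R t ys \<and> remdups_adj (map C ys) = remdups_adj (map C xs)"
      by (rule fin_trace_simulation[OF determined xs(1) \<open>C t = C s\<close>])
    then obtain ys where "fin_path R t ys" "remdups_adj (map C ys) = l"
      using xs(2) by auto
    then show ?thesis
      using FinT by (auto simp: FinT_in_ctraces)
  next
    case (InfT h)
    then obtain p where p: "inf_path R s p" "contract_inf (C \<circ> p) = tr"
      using tr unfolding ctraces_def by auto
    then obtain b where "block_starts (C \<circ> p) b"
      using InfT block_starts_of_contract_inf by blast
    then obtain q b' where q: "inf_path R t q" "block_starts (C \<circ> q) b'" "C \<circ> q \<circ> b' = C \<circ> p \<circ> b"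
      using inf_trace_simulation[OF determined p(1)] \<open>C t = C s\<close> by blast
    then have "contract_inf (C \<circ> q) = tr"
      using p(2) \<open>block_starts (C \<circ> p) b\<close> by (simp add: contract_inf_block_starts)
    then show ?thesis
      using q(1) unfolding ctraces_def by blast
  qed
qed

theorem lemma2p5:
  fixes L :: "'s \<Rightarrow> 'ap set" and R :: "'s \<Rightarrow> 's \<Rightarrow> bool" and C :: "'s \<Rightarrow> 'c"
  assumes "\<forall>s t. C s = C t \<longrightarrow>
             L s = L t \<and>
             {tr \<in> ctraces R C s. ctrace_len tr = Some 2} = {tr \<in> ctraces R C t. ctrace_len tr = Some 2}"
  shows "consistent L R C"
  unfolding consistent_def
proof (intro allI impI conjI)
  have determined: "colour_determines_steps R C"
    using assms by (intro colour_determines_stepsI) blast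
  fix s t
  assume "C s = C t"
  then show "L s = L t"
    using assms by blast
  show "ctraces R C s = ctraces R C t"
    using ctraces_subset[OF determined] \<open>C s = C t\<close> by (simp add: subset_antisym)
qed

end
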